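(* Let $n\geqslant 1$ and $1\leqslant i\leqslant n$. If $\sigma,\tau\in W_n$ satisfy $\sigma s_j\cdots s_nW_{n-1}=\tau s_j\cdots s_nW_{n-1}$ for all $j=i,\ldots,n+1$, then $\sigma^{-1}\tau\in W_{i-2}$. Equivalently, $W_{n-1}\cap(s_nW_{n-1}s_n)\cap\cdots\cap(s_i\cdots s_nW_{n-1}s_n\cdots s_i)=W_{i-2}$.
   Context: Standing setup: $\Gamma_1$ is an arbitrary finite Coxeter diagram with a preferred vertex $s_1$ (edge $\{s,t\}$ iff $m_{st}\geqslant3$; unlabelled edge means $m_{st}=3$, no edge means $m_{st}=2$). For $n\geqslant 2$, $\Gamma_n$ is obtained from $\Gamma_{n-1}$ by adding one new vertex $s_n$ joined by an unlabelled edge to $s_{n-1}$ and to no other vertex. $\Gamma_0$ is $\Gamma_1$ with $s_1$ deleted; $\Gamma_{-1}$ is $\Gamma_1$ with $s_1$ and all its neighbours deleted. For $n\geqslant -1$, $S_n$ is the vertex set of $\Gamma_n$ and $W_n$ the Coxeter group; $S_n=S_0\cup\{s_1,\dots,s_n\}$ and $W_m$ ($m\leqslant n$) is identified with the standard parabolic subgroup of $W_n$ generated by $S_m$. Convention: for $j=n+1$ the symbol $s_j\cdots s_nW_{n-1}$ means $W_{n-1}$. *)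

theory Defs
  imports Main "HOL-Library.Extended_Nat"
begin

text \<open>Vertices: Inl a for the vertices of Gamma_0 (a in S0), Inr k for s_k (k >= 1).
  A Coxeter matrix is a function to enat; the value infinity means no relation.\<close>

definition coxeter_matrix :: "'v set \<Rightarrow> ('v \<Rightarrow> 'v \<Rightarrow> enat) \<Rightarrow> bool" where
  "coxeter_matrix S m \<longleftrightarrow>
     (\<forall>s\<in>S. m s s = 1) \<and>
     (\<forall>s\<in>S. \<forall>t\<in>S. m s t = m t s) \<and>
     (\<forall>s\<in>S. \<forall>t\<in>S. s \<noteq> t \<longrightarrow> m s t \<ge> 2)"

inductive cox_eq :: "'v set \<Rightarrow> ('v \<Rightarrow> 'v \<Rightarrow> enat) \<Rightarrow> 'v list \<Rightarrow> 'v list \<Rightarrow> bool"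
  for S m where
  refl: "cox_eq S m w w"
| sym: "cox_eq S m u v \<Longrightarrow> cox_eq S m v u"
| trans: "cox_eq S m u v \<Longrightarrow> cox_eq S m v w \<Longrightarrow> cox_eq S m u w"
| cong: "cox_eq S m u v \<Longrightarrow> set x \<subseteq> S \<Longrightarrow> set y \<subseteq> S \<Longrightarrow> cox_eq S m (x @ u @ y) (x @ v @ y)"
| rel: "s \<in> S \<Longrightarrow> t \<in> S \<Longrightarrow> m s t = enat k \<Longrightarrow> cox_eq S m (concat (replicate k [s, t])) []"

text \<open>The Coxeter matrix of Gamma_n (for all n at once), built from the matrix m1 of Gamma_1.\<close>
definition gamma_M :: "(('a + nat) \<Rightarrow> ('a + nat) \<Rightarrow> enat) \<Rightarrow> ('a + nat) \<Rightarrow> ('a + nat) \<Rightarrow> enat" where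
  "gamma_M m1 x y = (case (x, y) of
      (Inl a, Inl b) \<Rightarrow> m1 x y
    | (Inl a, Inr j) \<Rightarrow> (if j = 1 then m1 x y else 2)
    | (Inr j, Inl a) \<Rightarrow> (if j = 1 then m1 x y else 2)
    | (Inr i, Inr j) \<Rightarrow> (if i = j then 1 else if i = j + 1 \<or> j = i + 1 then 3 else 2))"

text \<open>Vertex set S_k of Gamma_k for k >= -1 (k = -1: delete s_1 and its neighbours from Gamma_1).\<close>
definition gamma_S :: "'a set \<Rightarrow> (('a + nat) \<Rightarrow> ('a + nat) \<Rightarrow> enat) \<Rightarrow> int \<Rightarrow> ('a + nat) set" where
  "gamma_S S0 m1 k = (if k < 0 then Inl ` {a \<in> S0. m1 (Inl a) (Inr 1) = 2}
                      else Inl ` S0 \<union> Inr ` {1..nat k})"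

definition in_parabolic :: "'a set \<Rightarrow> (('a + nat) \<Rightarrow> ('a + nat) \<Rightarrow> enat) \<Rightarrow> nat \<Rightarrow> int \<Rightarrow> ('a + nat) list \<Rightarrow> bool" where
  "in_parabolic S0 m1 n k w \<longleftrightarrow>
     (\<exists>v. set v \<subseteq> gamma_S S0 m1 k \<and> cox_eq (gamma_S S0 m1 (int n)) (gamma_M m1) w v)"

definition chain_word :: "nat \<Rightarrow> nat \<Rightarrow> ('a + nat) list" where
  "chain_word j n = map Inr [j..<n+1]"

end

theory Submission
  imports Defs Complex_Main
begin

text \<open>For generators \<open>I \<subseteq> S\<close> and \<open>s \<in> S - I\<close> of a Coxeter group, \<open>W\<^sub>I \<inter> s W\<^sub>I s\<close> is
  generated by the elements of \<open>I\<close> commuting with \<open>s\<close>. Let \<open>x \<in> W\<^sub>I\<close> with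
  \<open>s x s \<in> W\<^sub>I\<close>, written as a reduced word \<open>x\<^sub>1 t\<close> over \<open>I\<close>. The reflection
  \<open>x\<^sub>1 t x\<^sub>1\<^sup>-\<^sup>1\<close> occurs exactly once in the reflection sequence of \<open>x\<close>, hence its
  \<open>s\<close>-conjugate occurs an odd number of times in that of \<open>s x = y s\<close> with \<open>y \<in> W\<^sub>I\<close>
  (parities of such counts are invariant under the Coxeter relations). This forces
  \<open>s t s \<in> W\<^sub>I\<close>, and counting once more, \<open>s t = t s\<close>; then \<open>s x\<^sub>1 s \<in> W\<^sub>I\<close> and
  we induct on the length. The geometric representation separates generators and
  detects non-commuting pairs.

  In \<open>\<Gamma>\<^sub>n\<close> the generators of \<open>S\<^sub>k\<^sub>-\<^sub>1\<close> commuting with \<open>s\<^sub>k\<close> are those of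
  \<open>S\<^sub>k\<^sub>-\<^sub>2\<close>, so \<open>W\<^sub>k\<^sub>-\<^sub>1 \<inter> s\<^sub>k W\<^sub>k\<^sub>-\<^sub>1 s\<^sub>k = W\<^sub>k\<^sub>-\<^sub>2\<close>. If \<open>\<sigma>\<^sup>-\<^sup>1\<tau> \<in> W\<^sub>j\<^sub>-\<^sub>1\<close>
  and its conjugate by \<open>s\<^sub>j \<cdots> s\<^sub>n\<close> lies in \<open>W\<^sub>n\<^sub>-\<^sub>1\<close>, peeling off
  \<open>s\<^sub>n, \<dots>, s\<^sub>j\<close> one at a time gives \<open>\<sigma>\<^sup>-\<^sup>1\<tau> \<in> W\<^sub>j\<^sub>-\<^sub>2\<close>; descending from
  \<open>j = n + 1\<close> to \<open>j = i\<close> proves the theorem.\<close>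

section \<open>Dihedral rotations\<close>

text \<open>For reflections \<open>r\<^sub>u, r\<^sub>v\<close> with \<open>B(\<alpha>\<^sub>u, \<alpha>\<^sub>v) = -c\<close>, this is how the pair
  \<open>(B(\<alpha>\<^sub>u, f), B(\<alpha>\<^sub>v, f))\<close> transforms under \<open>f \<mapsto> r\<^sub>u (r\<^sub>v f)\<close>.\<close>

definition dihedral_map :: "real \<Rightarrow> real \<times> real \<Rightarrow> real \<times> real" where
  "dihedral_map c p = (- fst p - 2 * c * snd p, 2 * c * fst p + (4 * c\<^sup>2 - 1) * snd p)"

lemma dihedral_map_power:
  assumes cos: "cos \<theta> = 2 * c\<^sup>2 - 1" and sin: "sin \<theta> \<noteq> 0"
  defines "U j \<equiv> sin (real j * \<theta>) / sin \<theta>"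
  shows "(dihedral_map c ^^ Suc j) p =
    (U (Suc j) * fst (dihedral_map c p) - U j * fst p, U (Suc j) * snd (dihedral_map c p) - U j * snd p)"
proof (induction j)
  case 0
  then show ?case using sin by (simp add: U_def)
next
  case (Suc j)
  have U_rec: "U (Suc (Suc j)) = 2 * cos \<theta> * U (Suc j) - U j"
  proof -
    have "sin (real (Suc (Suc j)) * \<theta>) = sin (real (Suc j) * \<theta> + \<theta>)"
      and "sin (real j * \<theta>) = sin (real (Suc j) * \<theta> - \<theta>)"
      by (simp_all add: algebra_simps)
    then show ?thesis
      unfolding U_def by (simp add: sin_add sin_diff diff_divide_distrib[symmetric])
  qed
  have linear: "dihedral_map c (a * fst q - b * fst p, a * snd q - b * snd p)
      = (a * fst (dihedral_map c q) - b * fst (dihedral_map c p),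
         a * snd (dihedral_map c q) - b * snd (dihedral_map c p))" for a b q
    by (simp add: dihedral_map_def algebra_simps)
  have square: "dihedral_map c (dihedral_map c p) =
      (2 * cos \<theta> * fst (dihedral_map c p) - fst p, 2 * cos \<theta> * snd (dihedral_map c p) - snd p)"
    unfolding cos by (simp add: dihedral_map_def algebra_simps power2_eq_square)
  show ?case
    using Suc unfolding funpow.simps(2) comp_def
    by (simp only: linear square U_rec) (simp add: algebra_simps)
qed

lemma dihedral_map_order:
  assumes k: "k \<ge> 2"
  shows "dihedral_map (cos (pi / real k)) ^^ k = id"
proof (cases "k = 2")
  case True
  then show ?thesis by (auto simp: fun_eq_iff dihedral_map_def numeral_2_eq_2)
next
  case False
  define \<theta> where "\<theta> = 2 * pi / real k"
  have cos: "cos \<theta> = 2 * (cos (pi / real k))\<^sup>2 - 1"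
    using cos_double_cos[of "pi / real k"] by (simp add: \<theta>_def mult.commute)
  have "0 < \<theta>" "\<theta> < pi"
    using k False by (simp_all add: \<theta>_def field_simps)
  then have sin: "sin \<theta> > 0" by (simp add: sin_gt_zero)
  have full_turn: "real k * \<theta> = 2 * pi" using k by (simp add: \<theta>_def)
  then have "real (k - 1) * \<theta> = 2 * pi - \<theta>" using k by (simp add: algebra_simps)
  then have "sin (real (k - 1) * \<theta>) = - sin \<theta>" by (simp add: sin_diff)
  moreover have "Suc (k - 1) = k" using k by simp
  ultimately have "(dihedral_map (cos (pi / real k)) ^^ k) p = p" for p
    using dihedral_map_power[OF cos, of "k - 1" p] sin full_turn by (cases p) simp
  then show ?thesis by (simp add: fun_eq_iff)
qed

section \<open>Words in a Coxeter group\<close>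

locale coxeter_system =
  fixes S :: "'v set" and M :: "'v \<Rightarrow> 'v \<Rightarrow> enat"
  assumes finite_gens: "finite S" and coxeter: "coxeter_matrix S M"
begin

lemma M_diag: "s \<in> S \<Longrightarrow> M s s = 1"
  and M_sym: "s \<in> S \<Longrightarrow> t \<in> S \<Longrightarrow> M s t = M t s"
  and M_ge_2: "s \<in> S \<Longrightarrow> t \<in> S \<Longrightarrow> s \<noteq> t \<Longrightarrow> M s t \<ge> 2"
  using coxeter by (auto simp: coxeter_matrix_def)

abbreviation word_eq (infix "\<simeq>" 50) where "u \<simeq> v \<equiv> cox_eq S M u v"

lemma word_eq_refl [simp]: "w \<simeq> w"
  by (rule cox_eq.refl)

lemmas word_eq_sym = cox_eq.sym[of S M]
lemmas word_eq_trans[trans] = cox_eq.trans[of S M]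

lemma word_eq_filter_nongens: "u \<simeq> v \<Longrightarrow> filter (\<lambda>a. a \<notin> S) u = filter (\<lambda>a. a \<notin> S) v"
proof (induction rule: cox_eq.induct)
  case (cong u v x y)
  then have "filter (\<lambda>a. a \<notin> S) x = []" "filter (\<lambda>a. a \<notin> S) y = []"
    by (auto simp: filter_empty_conv)
  then show ?case using cong.IH by simp
next
  case (rel s t k)
  then show ?case by (induction k) auto
qed auto

lemma word_eq_set_subset: "u \<simeq> v \<Longrightarrow> set u \<subseteq> S \<Longrightarrow> set v \<subseteq> S"
  using word_eq_filter_nongens[of u v] by (metis filter_empty_conv subset_code(1))

lemma word_eq_append:
  "u \<simeq> u' \<Longrightarrow> v \<simeq> v' \<Longrightarrow> set u \<subseteq> S \<Longrightarrow> set v' \<subseteq> S \<Longrightarrow> u @ v \<simeq> u' @ v'"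
  using cox_eq.cong[of S M v v' u "[]"] cox_eq.cong[of S M u u' "[]" v'] word_eq_trans by simp

lemma word_eq_square: "a \<in> S \<Longrightarrow> [a, a] \<simeq> []"
  using cox_eq.rel[of a S a M 1] M_diag[of a] by (simp add: one_enat_def)

lemma word_rev_cancel: "set w \<subseteq> S \<Longrightarrow> w @ rev w \<simeq> []"
proof (induction w)
  case (Cons a w)
  then have "[a] @ (w @ rev w) @ [a] \<simeq> [a] @ [] @ [a]" by (intro cox_eq.cong) auto
  then show ?case using Cons word_eq_square[of a] by (auto intro: word_eq_trans)
qed simp

lemma word_eq_cancel:
  "set u \<subseteq> S \<Longrightarrow> set w \<subseteq> S \<Longrightarrow> set v \<subseteq> S \<Longrightarrow> u @ w @ rev w @ v \<simeq> u @ v"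
  using cox_eq.cong[OF word_rev_cancel[of w], of u v] by simp

lemma word_eq_cancel':
  "set u \<subseteq> S \<Longrightarrow> set w \<subseteq> S \<Longrightarrow> set v \<subseteq> S \<Longrightarrow> u @ rev w @ w @ v \<simeq> u @ v"
  using word_eq_cancel[of u "rev w" v] by simp

lemma word_eq_cancel_letter: "set u \<subseteq> S \<Longrightarrow> a \<in> S \<Longrightarrow> set v \<subseteq> S \<Longrightarrow> u @ a # a # v \<simeq> u @ v"
  using word_eq_cancel[of u "[a]" v] by simp

lemma word_eq_rev:
  assumes uv: "u \<simeq> v" and u: "set u \<subseteq> S"
  shows "rev u \<simeq> rev v"
proof -
  have v: "set v \<subseteq> S" using word_eq_set_subset[OF uv u] .
  have "rev u \<simeq> rev u @ v @ rev v"
    using word_eq_cancel[of "rev u" v "[]"] u v by (simp add: word_eq_sym)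
  also have "\<dots> \<simeq> rev u @ u @ rev v"
    using cox_eq.cong[OF word_eq_sym[OF uv], of "rev u" "rev v"] u v by simp
  also have "\<dots> \<simeq> rev v"
    using word_eq_cancel'[of "[]" u "rev v"] u v by simp
  finally show ?thesis .
qed

lemma word_eq_cancel_left:
  assumes wuv: "w @ u \<simeq> w @ v" and w: "set w \<subseteq> S" and u: "set u \<subseteq> S"
  shows "u \<simeq> v"
proof -
  have v: "set v \<subseteq> S" using word_eq_set_subset[OF wuv] w u by auto
  have "u \<simeq> rev w @ (w @ u) @ []" using word_eq_cancel'[of "[]" w u] w u by (simp add: word_eq_sym)
  also have "\<dots> \<simeq> rev w @ (w @ v) @ []" using cox_eq.cong[OF wuv, of "rev w" "[]"] w by simp
  also have "\<dots> \<simeq> v" using word_eq_cancel'[of "[]" w v] w v by simp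
  finally show ?thesis .
qed

lemma word_eq_cancel_right:
  assumes uwv: "u @ w \<simeq> v @ w" and w: "set w \<subseteq> S" and u: "set u \<subseteq> S"
  shows "u \<simeq> v"
proof -
  have "rev w @ rev u \<simeq> rev w @ rev v" using word_eq_rev[OF uwv] w u by simp
  then have "rev u \<simeq> rev v" using word_eq_cancel_left w u by simp
  then show ?thesis using word_eq_rev[of "rev u" "rev v"] u by simp
qed

lemma conj_word_eq_iff:
  assumes x: "set x \<subseteq> S" and t: "set t \<subseteq> S" and r: "set r \<subseteq> S"
  shows "x @ t @ rev x \<simeq> r \<longleftrightarrow> t \<simeq> rev x @ r @ x"
proof
  assume h: "x @ t @ rev x \<simeq> r"
  have "t \<simeq> rev x @ (x @ t @ rev x) @ x"
    using word_eq_cancel'[of "[]" x "t @ rev x @ x"] word_eq_cancel'[of t x "[]"] x t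
    by (auto intro: word_eq_sym word_eq_trans)
  also have "\<dots> \<simeq> rev x @ r @ x" using cox_eq.cong[OF h, of "rev x" x] x by simp
  finally show "t \<simeq> rev x @ r @ x" .
next
  assume h: "t \<simeq> rev x @ r @ x"
  have "x @ t @ rev x \<simeq> x @ (rev x @ r @ x) @ rev x" using cox_eq.cong[OF h, of x "rev x"] x by simp
  also have "\<dots> \<simeq> r @ x @ rev x" using word_eq_cancel[of "[]" x "r @ x @ rev x"] x r by simp
  also have "\<dots> \<simeq> r" using word_eq_cancel[of r x "[]"] x r by simp
  finally show "x @ t @ rev x \<simeq> r" .
qed

definition in_W :: "'v set \<Rightarrow> 'v list \<Rightarrow> bool" where
  "in_W I w \<longleftrightarrow> (\<exists>v. set v \<subseteq> I \<and> w \<simeq> v)"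

lemma in_W_word_eq: "in_W I u \<Longrightarrow> v \<simeq> u \<Longrightarrow> in_W I v"
  unfolding in_W_def by (blast intro: word_eq_trans)

section \<open>The geometric representation\<close>

text \<open>Tits' geometric representation: vectors are functions \<open>S \<rightarrow> \<real>\<close>, \<open>simple_root s\<close>
  is the basis vector \<open>\<alpha>\<^sub>s\<close>, and \<open>bilin s t = B(\<alpha>\<^sub>s, \<alpha>\<^sub>t) = - cos (\<pi> / m\<^sub>s\<^sub>t)\<close>.\<close>

definition bilin :: "'v \<Rightarrow> 'v \<Rightarrow> real" where
  "bilin s t = (case M s t of enat k \<Rightarrow> - cos (pi / real k) | \<infinity> \<Rightarrow> -1)"

definition pairing :: "'v \<Rightarrow> ('v \<Rightarrow> real) \<Rightarrow> real" where
  "pairing s f = (\<Sum>t\<in>S. bilin s t * f t)"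

definition simple_root :: "'v \<Rightarrow> 'v \<Rightarrow> real" where
  "simple_root s = (\<lambda>t. if t = s then 1 else 0)"

definition reflect :: "'v \<Rightarrow> ('v \<Rightarrow> real) \<Rightarrow> 'v \<Rightarrow> real" where
  "reflect s f = (\<lambda>t. f t - 2 * pairing s f * simple_root s t)"

definition act :: "'v list \<Rightarrow> ('v \<Rightarrow> real) \<Rightarrow> 'v \<Rightarrow> real" where
  "act w = foldr (\<lambda>s g. reflect s \<circ> g) w id"

lemma act_simps [simp]: "act [] = id" "act (s # w) = reflect s \<circ> act w"
  by (simp_all add: act_def)

lemma act_append: "act (u @ v) = act u \<circ> act v"
  by (induction u) auto

lemma act_replicate: "act (concat (replicate k w)) = act w ^^ k"
  by (induction k) (auto simp: act_append)

lemma bilin_diag: "s \<in> S \<Longrightarrow> bilin s s = 1"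
  using M_diag[of s] by (simp add: bilin_def one_enat_def)

lemma bilin_sym: "s \<in> S \<Longrightarrow> t \<in> S \<Longrightarrow> bilin s t = bilin t s"
  using M_sym[of s t] by (simp add: bilin_def)

lemma bilin_nonzero:
  assumes "s \<in> S" "t \<in> S" "s \<noteq> t" "M s t \<noteq> 2"
  shows "bilin s t \<noteq> 0"
proof (cases "M s t")
  case (enat k)
  then have "k \<ge> 3" using M_ge_2[of s t] assms by (auto simp: numeral_eq_enat)
  then have "0 < cos (pi / real k)"
    by (intro cos_gt_zero_pi) (auto simp: field_simps intro: less_le_trans[of _ 0])
  then show ?thesis using enat by (simp add: bilin_def)
qed (simp add: bilin_def)

lemma pairing_add_simple_root:
  assumes "t \<in> S"
  shows "pairing s (\<lambda>z. f z + a * simple_root t z) = pairing s f + a * bilin s t"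
proof -
  have "(\<Sum>z\<in>S. a * bilin s z * simple_root t z) = a * bilin s t"
    using assms finite_gens by (simp add: simple_root_def if_distrib cong: if_cong)
  then show ?thesis by (simp add: pairing_def sum.distrib algebra_simps)
qed

lemma pairing_simple_root: "t \<in> S \<Longrightarrow> pairing s (simple_root t) = bilin s t"
  using pairing_add_simple_root[of t s "\<lambda>_. 0" 1] by (simp add: pairing_def)

lemma pairing_reflect: "t \<in> S \<Longrightarrow> pairing s (reflect t f) = pairing s f - 2 * pairing t f * bilin s t"
  using pairing_add_simple_root[of t s f "- 2 * pairing t f"] by (simp add: reflect_def)

lemma reflect_involution: "s \<in> S \<Longrightarrow> reflect s (reflect s f) = f"
  using pairing_reflect[of s s f] bilin_diag[of s] by (simp add: reflect_def fun_eq_iff)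

lemma act_pair_power_shape:
  "\<exists>\<alpha> \<beta>. (act [u, v] ^^ j) f = (\<lambda>z. f z + \<alpha> * simple_root u z + \<beta> * simple_root v z)"
proof (induction j)
  case 0
  show ?case by (rule exI[of _ 0], rule exI[of _ 0]) simp
next
  case (Suc j)
  then obtain \<alpha> \<beta> where IH: "(act [u, v] ^^ j) f = (\<lambda>z. f z + \<alpha> * simple_root u z + \<beta> * simple_root v z)"
    by blast
  define g where "g = (act [u, v] ^^ j) f"
  have g: "g = (\<lambda>z. f z + \<alpha> * simple_root u z + \<beta> * simple_root v z)"
    unfolding g_def by (rule IH)
  have "(act [u, v] ^^ Suc j) f = reflect u (reflect v g)" by (simp add: g_def)
  also have "\<dots> = (\<lambda>z. f z + (\<alpha> - 2 * pairing u (reflect v g)) * simple_root u z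
      + (\<beta> - 2 * pairing v g) * simple_root v z)"
    by (simp add: reflect_def g algebra_simps fun_eq_iff)
  finally show ?case by blast
qed

lemma pairing_act_pair_power:
  assumes u: "u \<in> S" and v: "v \<in> S" and uv: "bilin u v = - c" "bilin v u = - c"
  shows "(pairing u ((act [u, v] ^^ j) f), pairing v ((act [u, v] ^^ j) f))
    = (dihedral_map c ^^ j) (pairing u f, pairing v f)"
proof (induction j)
  case (Suc j)
  define g where "g = (act [u, v] ^^ j) f"
  have "(act [u, v] ^^ Suc j) f = reflect u (reflect v g)" by (simp add: g_def)
  then have "(pairing u ((act [u, v] ^^ Suc j) f), pairing v ((act [u, v] ^^ Suc j) f))
      = dihedral_map c (pairing u g, pairing v g)"
    using u v by (simp add: pairing_reflect uv bilin_diag dihedral_map_def algebra_simps power2_eq_square)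
  also have "\<dots> = dihedral_map c ((dihedral_map c ^^ j) (pairing u f, pairing v f))"
    using Suc.IH by (simp only: g_def)
  finally show ?case by (simp only: funpow.simps(2) o_apply)
qed simp

lemma act_relator:
  assumes u: "u \<in> S" and v: "v \<in> S" and k: "M u v = enat k"
  shows "act (concat (replicate k [u, v])) = id"
proof (cases "u = v")
  case True
  then have "k = 1" using M_diag[OF u] k by (simp add: one_enat_def)
  then show ?thesis using True reflect_involution[OF u] by (auto simp: fun_eq_iff)
next
  case False
  then have k2: "k \<ge> 2" using M_ge_2[OF u v] k by (simp add: numeral_eq_enat)
  define c where "c = cos (pi / real k)"
  have uv: "bilin u v = - c" "bilin v u = - c" using k bilin_sym[OF u v] by (simp_all add: bilin_def c_def)
  have bounds: "0 < pi / real k" "pi / real k \<le> pi / 2"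
    using k2 by (simp, intro divide_left_mono) auto
  then have "0 \<le> c" unfolding c_def by (intro cos_ge_zero) linarith+
  moreover have "cos (pi / real k) < cos 0"
    by (rule cos_monotone_0_pi) (use bounds pi_gt_zero in linarith)+
  then have "c < 1" by (simp add: c_def)
  ultimately have c2: "c * c < 1" using mult_left_le[of c c] by linarith
  have "(act [u, v] ^^ k) f = f" for f
  proof -
    obtain \<alpha> \<beta> where shape: "(act [u, v] ^^ k) f = (\<lambda>z. f z + \<alpha> * simple_root u z + \<beta> * simple_root v z)"
      using act_pair_power_shape by blast
    have "pairing x ((act [u, v] ^^ k) f) = pairing x f + \<alpha> * bilin x u + \<beta> * bilin x v" for x
      unfolding shape using pairing_add_simple_root[OF v, of x "\<lambda>z. f z + \<alpha> * simple_root u z"]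
        pairing_add_simple_root[OF u, of x f] by simp
    then have "pairing u ((act [u, v] ^^ k) f) = pairing u f + \<alpha> - c * \<beta>"
      "pairing v ((act [u, v] ^^ k) f) = pairing v f - c * \<alpha> + \<beta>"
      using u v by (simp_all add: uv bilin_diag)
    moreover have "(pairing u ((act [u, v] ^^ k) f), pairing v ((act [u, v] ^^ k) f))
        = (pairing u f, pairing v f)"
      using pairing_act_pair_power[OF u v uv] dihedral_map_order[OF k2] by (simp add: c_def)
    ultimately have \<alpha>: "\<alpha> = c * \<beta>" and "\<beta> = c * \<alpha>"
      by (simp_all only: prod.inject) linarith+
    then have "c * (c * \<beta>) = \<beta>" by metis
    then have "\<beta> * (1 - c * c) = 0" by (simp add: algebra_simps)
    then have "\<beta> = 0" "\<alpha> = 0" using c2 \<alpha> by simp_all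
    then show ?thesis using shape by simp
  qed
  then show ?thesis by (simp add: act_replicate fun_eq_iff)
qed

lemma act_word_eq: "u \<simeq> v \<Longrightarrow> act u = act v"
  by (induction rule: cox_eq.induct) (auto simp: act_append act_relator)

lemma act_avoiding: "s \<notin> set w \<Longrightarrow> act w f s = f s"
  by (induction w arbitrary: f) (auto simp: reflect_def simple_root_def)

lemma generator_not_in_W:
  assumes s: "s \<in> S" "s \<notin> I" and v: "set v \<subseteq> I"
  shows "\<not> [s] \<simeq> v"
proof
  assume "[s] \<simeq> v"
  then have "act [s] (simple_root s) s = act v (simple_root s) s" by (metis act_word_eq)
  moreover have "act v (simple_root s) s = 1" using s v by (subst act_avoiding) (auto simp: simple_root_def)
  moreover have "act [s] (simple_root s) s = -1"
    using s by (simp add: reflect_def pairing_simple_root bilin_diag) (simp add: simple_root_def)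
  ultimately show False by simp
qed

lemma noncommuting_generators:
  assumes s: "s \<in> S" and t: "t \<in> S" and st: "s \<noteq> t" "M s t \<noteq> 2"
  shows "\<not> [s, t] \<simeq> [t, s]"
proof
  assume "[s, t] \<simeq> [t, s]"
  then have "act [s, t] (simple_root s) t = act [t, s] (simple_root s) t" by (metis act_word_eq)
  moreover have "act [s, t] (simple_root s) t = - 2 * bilin t s"
    using s t st by (simp add: reflect_def pairing_simple_root) (simp add: simple_root_def)
  moreover have "act [t, s] (simple_root s) t = 2 * bilin t s"
  proof -
    have "reflect s (simple_root s) = (\<lambda>z. simple_root s z + (-2) * simple_root s z)"
      using s by (simp add: reflect_def pairing_simple_root bilin_diag fun_eq_iff)
    then show ?thesis
      using s t st pairing_add_simple_root[OF s, of t "simple_root s" "-2"]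
      by (simp add: reflect_def pairing_simple_root) (simp add: simple_root_def)
  qed
  ultimately show False using bilin_nonzero[OF t s] st M_sym[OF s t] by auto
qed

section \<open>Reflection sequences\<close>

fun refl_seq :: "'v list \<Rightarrow> 'v list list" where
  "refl_seq [] = []"
| "refl_seq (a # w) = [a] # map (\<lambda>t. [a] @ t @ [a]) (refl_seq w)"

definition refl_count :: "'v list \<Rightarrow> 'v list \<Rightarrow> nat" where
  "refl_count w r = length (filter (\<lambda>t. t \<simeq> r) (refl_seq w))"

lemma length_refl_seq [simp]: "length (refl_seq w) = length w"
  by (induction w) auto

lemma nth_refl_seq: "p < length w \<Longrightarrow> refl_seq w ! p = take p w @ [w ! p] @ rev (take p w)"
proof (induction w arbitrary: p)
  case (Cons a w)
  then show ?case by (cases p) auto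
qed simp

lemma set_refl_seq: "t \<in> set (refl_seq w) \<Longrightarrow> set t \<subseteq> set w"
  by (induction w arbitrary: t) fastforce+

lemma refl_seq_append: "refl_seq (u @ v) = refl_seq u @ map (\<lambda>t. u @ t @ rev u) (refl_seq v)"
  by (induction u) auto

lemma refl_count_cong: "r \<simeq> r' \<Longrightarrow> refl_count w r = refl_count w r'"
  unfolding refl_count_def by (metis (no_types, lifting) word_eq_sym word_eq_trans)

lemma refl_count_append:
  assumes u: "set u \<subseteq> S" and v: "set v \<subseteq> S" and r: "set r \<subseteq> S"
  shows "refl_count (u @ v) r = refl_count u r + refl_count v (rev u @ r @ u)"
proof -
  have "filter (\<lambda>t. u @ t @ rev u \<simeq> r) (refl_seq v) = filter (\<lambda>t. t \<simeq> rev u @ r @ u) (refl_seq v)"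
    using conj_word_eq_iff[OF u _ r] set_refl_seq v by (intro filter_cong) blast+
  then show ?thesis by (simp add: refl_count_def refl_seq_append filter_map o_def)
qed

fun alt_word :: "'v \<Rightarrow> 'v \<Rightarrow> nat \<Rightarrow> 'v list" where
  "alt_word s t 0 = []"
| "alt_word s t (Suc n) = s # alt_word t s n"

lemma alt_word_replicate: "concat (replicate k [s, t]) = alt_word s t (2 * k)"
  by (induction k) auto

lemma alt_word_add_even: "alt_word s t (2 * a + b) = alt_word s t (2 * a) @ alt_word s t b"
  by (induction a) auto

lemma alt_word_snoc: "alt_word s t (Suc n) = alt_word s t n @ [if even n then s else t]"
  by (induction n arbitrary: s t) auto

lemma set_alt_word: "set (alt_word s t n) \<subseteq> {s, t}"
  by (induction n arbitrary: s t) auto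

lemma refl_seq_alt_word: "refl_seq (alt_word s t n) = map (\<lambda>p. alt_word s t (2 * p + 1)) [0..<n]"
proof (induction n arbitrary: s t)
  case (Suc n)
  have "[s] @ alt_word t s (2 * p + 1) @ [s] = alt_word s t (2 * Suc p + 1)" for p
    using alt_word_snoc[of t s "2 * p + 1"] by simp
  moreover have "map (\<lambda>p. alt_word s t (2 * p + 1)) [0..<Suc n]
      = alt_word s t 1 # map (\<lambda>p. alt_word s t (2 * Suc p + 1)) [0..<n]"
    by (simp add: map_upt_Suc del: upt_Suc)
  ultimately show ?case using Suc by simp
qed simp

text \<open>The reflection sequence of \<open>(st)\<^sup>k\<close> consists of two identical halves, since
  \<open>(st)\<^sup>k\<close> can be cancelled from the front of each of the last \<open>k\<close> reflections.\<close>

lemma refl_count_relator_even: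
  assumes s: "s \<in> S" and t: "t \<in> S" and k: "M s t = enat k"
  shows "even (refl_count (concat (replicate k [s, t])) r)"
proof -
  define P where "P p = (alt_word s t (2 * p + 1) \<simeq> r)" for p
  have periodic: "P (p + k) = P p" for p
  proof -
    have "alt_word s t (2 * k) \<simeq> []"
      using cox_eq.rel[of s S t M k] s t k by (simp add: alt_word_replicate)
    then have "[] @ alt_word s t (2 * k) @ alt_word s t (2 * p + 1) \<simeq> [] @ [] @ alt_word s t (2 * p + 1)"
      by (rule cox_eq.cong) (use set_alt_word s t in auto)
    then have "alt_word s t (2 * (p + k) + 1) \<simeq> alt_word s t (2 * p + 1)"
      using alt_word_add_even[of s t k "2 * p + 1"] by (simp add: algebra_simps)
    then show ?thesis unfolding P_def by (meson word_eq_sym word_eq_trans)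
  qed
  have "refl_count (concat (replicate k [s, t])) r = length (filter P [0..<k + k])"
    unfolding refl_count_def alt_word_replicate refl_seq_alt_word filter_map length_map
      mult_2[symmetric] P_def o_def by simp
  also have "[0..<k + k] = [0..<k] @ map (\<lambda>i. i + k) [0..<k]"
    by (simp add: map_add_upt upt_add_eq_append[of 0 k])
  also have "length (filter P \<dots>) = 2 * length (filter P [0..<k])"
    by (simp add: filter_map o_def periodic)
  finally show ?thesis by simp
qed

lemma refl_count_parity:
  "u \<simeq> v \<Longrightarrow> set u \<subseteq> S \<Longrightarrow> set r \<subseteq> S \<Longrightarrow> even (refl_count u r) = even (refl_count v r)"
proof (induction arbitrary: r rule: cox_eq.induct)
  case (sym u v)
  have "set u \<subseteq> S" using word_eq_set_subset[OF word_eq_sym[OF sym.hyps] sym.prems(1)] .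
  then show ?case using sym.IH[OF _ sym.prems(2)] by simp
next
  case (trans u v w)
  have "set v \<subseteq> S" using word_eq_set_subset[OF trans.hyps(1) trans.prems(1)] .
  then show ?case using trans.IH(1)[OF trans.prems] trans.IH(2)[OF _ trans.prems(2)] by simp
next
  case (cong u v x y)
  have u: "set u \<subseteq> S" and x: "set x \<subseteq> S" and y: "set y \<subseteq> S" using cong by auto
  have v: "set v \<subseteq> S" using word_eq_set_subset[OF cong.hyps(1) u] .
  define r' where "r' = rev x @ r @ x"
  have r': "set r' \<subseteq> S" using x cong.prems by (auto simp: r'_def)
  have "rev u @ r' @ u \<simeq> rev v @ r' @ v"
    using u v r' by (intro word_eq_append word_eq_rev cong.hyps(1) cox_eq.refl) auto
  then have "refl_count y (rev u @ r' @ u) = refl_count y (rev v @ r' @ v)"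
    by (rule refl_count_cong)
  moreover have "refl_count (x @ w @ y) r = refl_count x r + (refl_count w r' + refl_count y (rev w @ r' @ w))"
    if "set w \<subseteq> S" for w
    using refl_count_append[of x "w @ y" r] refl_count_append[of w y r'] that x y r' cong.prems
    by (simp add: r'_def)
  ultimately show ?case using cong.IH[OF u r'] u v by presburger
next
  case (rel s t k)
  have "refl_count [] r = 0" by (simp add: refl_count_def)
  then show ?case using refl_count_relator_even[OF rel(1-3), of r] by simp
qed simp

lemma odd_refl_count_in_refl_seq:
  assumes "odd (refl_count w r)"
  shows "\<exists>e\<in>set (refl_seq w). e \<simeq> r"
  using assms unfolding refl_count_def by (metis empty_filter_conv list.size(3) even_zero)

section \<open>Reduced words\<close>

definition delete_at :: "nat \<Rightarrow> 'v list \<Rightarrow> 'v list" where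
  "delete_at q w = take q w @ drop (Suc q) w"

definition reduced :: "'v list \<Rightarrow> bool" where
  "reduced w \<longleftrightarrow> set w \<subseteq> S \<and> (\<forall>v. set v \<subseteq> S \<longrightarrow> v \<simeq> w \<longrightarrow> length w \<le> length v)"

lemma set_delete_at: "set (delete_at q w) \<subseteq> set w"
  unfolding delete_at_def using set_take_subset set_drop_subset by fastforce

lemma length_delete_at: "q < length w \<Longrightarrow> length (delete_at q w) = length w - 1"
  by (simp add: delete_at_def)

lemma rev_nth_refl_seq: "p < length w \<Longrightarrow> rev (refl_seq w ! p) = refl_seq w ! p"
  by (simp add: nth_refl_seq)

lemma set_nth_refl_seq: "set w \<subseteq> S \<Longrightarrow> p < length w \<Longrightarrow> set (refl_seq w ! p) \<subseteq> S"
  using set_refl_seq[of "refl_seq w ! p" w] by (metis nth_mem length_refl_seq subset_trans)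

lemma nth_refl_seq_append:
  assumes w: "set w \<subseteq> S" and q: "q < length w"
  shows "refl_seq w ! q @ w \<simeq> delete_at q w"
proof -
  define A a B where "A = take q w" and "a = w ! q" and "B = drop (Suc q) w"
  have w_eq: "w = A @ a # B" unfolding A_def a_def B_def using id_take_nth_drop[OF q] .
  have S: "set A \<subseteq> S" "a \<in> S" "set B \<subseteq> S" using w unfolding w_eq by auto
  have "refl_seq w ! q = A @ [a] @ rev A" using nth_refl_seq[OF q] by (simp add: A_def a_def)
  then have "refl_seq w ! q @ w = (A @ [a]) @ rev A @ A @ ([a] @ B)" by (subst (2) w_eq) simp
  also have "\<dots> \<simeq> (A @ [a]) @ ([a] @ B)" using word_eq_cancel'[of "A @ [a]" A "[a] @ B"] S by simp
  also have "\<dots> = A @ a # a # B" by simp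
  also have "\<dots> \<simeq> A @ B" using word_eq_cancel_letter[of A a B] S by simp
  also have "A @ B = delete_at q w" by (simp add: delete_at_def A_def B_def)
  finally show ?thesis .
qed

lemma deletion:
  assumes w: "set w \<subseteq> S" and pq: "p < q" "q < length w"
    and eq: "refl_seq w ! p \<simeq> refl_seq w ! q"
  shows "w \<simeq> delete_at p (delete_at q w)"
proof -
  define tp where "tp = refl_seq w ! p"
  have tp: "set tp \<subseteq> S" using set_nth_refl_seq[OF w] pq by (simp add: tp_def)
  have del: "set (delete_at q w) \<subseteq> S" using set_delete_at w by blast
  have "tp = refl_seq (delete_at q w) ! p"
  proof -
    have "take p (delete_at q w) = take p w" "delete_at q w ! p = w ! p"
      using pq by (simp_all add: delete_at_def nth_append min_def)
    then show ?thesis using pq by (simp add: nth_refl_seq length_delete_at tp_def)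
  qed
  then have tp_del: "tp @ delete_at q w \<simeq> delete_at p (delete_at q w)"
    using nth_refl_seq_append[OF del, of p] pq by (simp add: length_delete_at)
  have "w \<simeq> tp @ rev tp @ w" using word_eq_cancel[of "[]" tp w] tp w by (simp add: word_eq_sym)
  also have "rev tp = tp" using rev_nth_refl_seq pq by (simp add: tp_def)
  also have "tp @ tp @ w \<simeq> tp @ (refl_seq w ! q @ w) @ []"
    using cox_eq.cong[of S M tp "refl_seq w ! q" tp "w @ []"] eq tp w by (simp add: tp_def)
  also have "\<dots> \<simeq> tp @ delete_at q w @ []"
    using cox_eq.cong[OF nth_refl_seq_append[OF w pq(2)], of tp "[]"] tp by simp
  also have "\<dots> \<simeq> delete_at p (delete_at q w)" using tp_del by simp
  finally show ?thesis .
qed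

lemma reduced_iff_distinct_reflections:
  assumes w: "set w \<subseteq> S"
  shows "reduced w \<longleftrightarrow>
    (\<forall>p q. p < q \<longrightarrow> q < length w \<longrightarrow> \<not> refl_seq w ! p \<simeq> refl_seq w ! q)"
    (is "_ \<longleftrightarrow> ?distinct")
proof
  assume r: "reduced w"
  show ?distinct
  proof (intro allI impI notI)
    fix p q assume pq: "p < q" "q < length w" "refl_seq w ! p \<simeq> refl_seq w ! q"
    have "w \<simeq> delete_at p (delete_at q w)" by (rule deletion[OF w pq])
    moreover have "set (delete_at p (delete_at q w)) \<subseteq> S" using set_delete_at w by (meson subset_trans)
    moreover have "length (delete_at p (delete_at q w)) < length w" using pq by (simp add: length_delete_at)
    ultimately show False using r unfolding reduced_def by (meson word_eq_sym not_le)
  qed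
next
  assume ?distinct
  then have distinct: "p = q" if "p < length w" "q < length w" "refl_seq w ! p \<simeq> refl_seq w ! q" for p q
    using that word_eq_sym by (metis linorder_neqE_nat)
  show "reduced w"
    unfolding reduced_def
  proof (intro conjI allI impI)
    fix v assume v: "set v \<subseteq> S" "v \<simeq> w"
    have "\<exists>i<length v. refl_seq v ! i \<simeq> refl_seq w ! p" if p: "p < length w" for p
    proof -
      have "{i. i < length w \<and> refl_seq w ! i \<simeq> refl_seq w ! p} = {p}" using distinct p by auto
      then have "refl_count w (refl_seq w ! p) = 1" by (simp add: refl_count_def length_filter_conv_card)
      then have "odd (refl_count v (refl_seq w ! p))"
        using refl_count_parity[OF word_eq_sym[OF v(2)] w set_nth_refl_seq[OF w p]] by simp
      then obtain e where "e \<in> set (refl_seq v)" "e \<simeq> refl_seq w ! p" using odd_refl_count_in_refl_seq by blast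
      then show ?thesis by (auto simp: in_set_conv_nth)
    qed
    then obtain f where f: "\<And>p. p < length w \<Longrightarrow> f p < length v \<and> refl_seq v ! f p \<simeq> refl_seq w ! p"
      by metis
    have "inj_on f {..<length w}"
      by (rule inj_onI) (metis f distinct word_eq_sym word_eq_trans lessThan_iff)
    moreover have "f ` {..<length w} \<subseteq> {..<length v}" using f by auto
    ultimately have "card {..<length w} \<le> card {..<length v}" by (intro card_inj_on_le) auto
    then show "length w \<le> length v" by simp
  qed (rule w)
qed

lemma not_reduced_shorter:
  assumes x: "set x \<subseteq> I" and I: "I \<subseteq> S" and not_reduced: "\<not> reduced x"
  shows "\<exists>x'. set x' \<subseteq> I \<and> length x' < length x \<and> x \<simeq> x'"
proof -
  have xS: "set x \<subseteq> S" using x I by blast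
  obtain p q where pq: "p < q" "q < length x" "refl_seq x ! p \<simeq> refl_seq x ! q"
    using reduced_iff_distinct_reflections[OF xS] not_reduced by blast
  show ?thesis
    using deletion[OF xS pq] set_delete_at[of p "delete_at q x"] set_delete_at[of q x] x pq
    by (intro exI[of _ "delete_at p (delete_at q x)"]) (auto simp: length_delete_at)
qed

lemma reduced_refl_count_odd:
  assumes r: "reduced w" and q: "q < length w"
  shows "odd (refl_count w (refl_seq w ! q))"
proof -
  have w: "set w \<subseteq> S" using r by (simp add: reduced_def)
  have "p = q" if "p < length w" "refl_seq w ! p \<simeq> refl_seq w ! q" for p
    using that q r reduced_iff_distinct_reflections[OF w] word_eq_sym by (metis linorder_neqE_nat)
  then have "{i. i < length w \<and> refl_seq w ! i \<simeq> refl_seq w ! q} = {q}" using q by auto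
  then show ?thesis by (simp add: refl_count_def length_filter_conv_card)
qed

section \<open>Intersections of conjugate parabolic subgroups\<close>

lemma letter_eq_if_pair_trivial: "a \<in> S \<Longrightarrow> b \<in> S \<Longrightarrow> [a, b] \<simeq> [] \<Longrightarrow> [a] \<simeq> [b]"
  using cox_eq.cong[of S M "[a, b]" "[]" "[]" "[b]"] word_eq_cancel_letter[of "[a]" b "[]"]
  by (simp add: word_eq_sym) (metis word_eq_sym word_eq_trans)

lemma sts_in_W_commute:
  assumes I: "I \<subseteq> S" and s: "s \<in> S" "s \<notin> I" and t: "t \<in> I" and sts: "in_W I [s, t, s]"
  shows "[s, t] \<simeq> [t, s]"
proof (rule ccontr)
  assume noncomm: "\<not> [s, t] \<simeq> [t, s]"
  have tS: "t \<in> S" using t I by blast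
  have not_s_t: "\<not> [s] \<simeq> [t]" "\<not> [t] \<simeq> [s]"
    using generator_not_in_W[OF s, of "[t]"] t word_eq_sym by auto
  have "\<not> [s] @ [t, s] \<simeq> [s] @ []"
    using word_eq_cancel_left[of "[s]" "[t, s]" "[]"] letter_eq_if_pair_trivial[of t s] s tS not_s_t
    by auto
  moreover have "\<not> [s, t, s, t] @ [s] \<simeq> [] @ [s]"
  proof
    assume "[s, t, s, t] @ [s] \<simeq> [] @ [s]"
    then have "[s, t, s, t] \<simeq> []" using word_eq_cancel_right s tS by simp
    then have "[s, t, s, t] @ [t, s] \<simeq> [] @ [t, s]" by (rule word_eq_append) (use s tS in auto)
    moreover have "[s, t, s, t] @ [t, s] \<simeq> [s, t]"
      using word_eq_cancel_letter[of "[s, t, s]" t "[s]"] word_eq_cancel_letter[of "[s, t]" s "[]"] s tS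
      by (simp add: word_eq_trans)
    ultimately show False using noncomm by (metis append_Nil word_eq_sym word_eq_trans)
  qed
  ultimately have "refl_count [s, t, s] [s] = 1" by (simp add: refl_count_def)
  moreover obtain e where e: "set e \<subseteq> I" "[s, t, s] \<simeq> e" using sts by (auto simp: in_W_def)
  ultimately have "odd (refl_count e [s])" using refl_count_parity[of "[s, t, s]" e "[s]"] s tS by simp
  then obtain r where "r \<in> set (refl_seq e)" "r \<simeq> [s]" using odd_refl_count_in_refl_seq by blast
  then show False using generator_not_in_W[OF s, of r] set_refl_seq e(1) word_eq_sym by blast
qed

lemma refl_count_conj_odd:
  assumes I: "I \<subseteq> S" and s: "s \<in> S" "s \<notin> I" and x: "set x \<subseteq> I"
    and red: "reduced x" and q: "q < length x"
  shows "odd (refl_count (s # x) ([s] @ refl_seq x ! q @ [s]))"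
proof -
  define r where "r = refl_seq x ! q"
  have xS: "set x \<subseteq> S" using x I by blast
  have rI: "set r \<subseteq> I" using set_refl_seq[of r x] x q by (auto simp: r_def)
  then have rS: "set r \<subseteq> S" using I by blast
  have "\<not> [s] \<simeq> [s] @ r @ [s]"
  proof
    assume "[s] \<simeq> [s] @ r @ [s]"
    then have "r \<simeq> [s, s, s]" using conj_word_eq_iff[of "[s]" r "[s]"] s rS word_eq_sym by auto
    moreover have "[s, s, s] \<simeq> [s]" using word_eq_cancel_letter[of "[]" s "[s]"] s by simp
    ultimately show False using generator_not_in_W[OF s rI] word_eq_sym word_eq_trans by blast
  qed
  then have "refl_count [s] ([s] @ r @ [s]) = 0" by (simp add: refl_count_def)
  moreover have "refl_count x ([s] @ ([s] @ r @ [s]) @ [s]) = refl_count x r"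
  proof (rule refl_count_cong)
    have "[s] @ ([s] @ r @ [s]) @ [s] \<simeq> r @ [s, s]"
      using word_eq_cancel_letter[of "[]" s "r @ [s, s]"] s rS by simp
    also have "\<dots> \<simeq> r" using word_eq_cancel_letter[of r s "[]"] s rS by simp
    finally show "[s] @ ([s] @ r @ [s]) @ [s] \<simeq> r" .
  qed
  ultimately show ?thesis
    using refl_count_append[of "[s]" x "[s] @ r @ [s]"] reduced_refl_count_odd[OF red q] s xS rS
    by (simp add: r_def)
qed

lemma conj_last_reflection:
  assumes sx: "s # x1 @ [t] \<simeq> y @ [s]"
    and s: "s \<in> S" and t: "t \<in> S" and x1: "set x1 \<subseteq> S" and y: "set y \<subseteq> S"
  shows "y @ [s, t, s] @ rev y \<simeq> [s] @ (x1 @ [t] @ rev x1) @ [s]"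
proof -
  define x where "x = x1 @ [t]"
  have x: "set x \<subseteq> S" using x1 t by (simp add: x_def)
  have "[s] @ rev y \<simeq> rev x @ [s]" using word_eq_rev[OF sx] s x word_eq_sym by (auto simp: x_def)
  then have "[t] @ ([s] @ rev y) \<simeq> [t] @ (rev x @ [s])"
    by (rule word_eq_append[OF word_eq_refl]) (use s x t in auto)
  then have "(y @ [s]) @ [t] @ ([s] @ rev y) \<simeq> (s # x) @ [t] @ (rev x @ [s])"
    by (rule word_eq_append[OF word_eq_sym[OF sx[folded x_def]]]) (use s x y t in auto)
  also have "\<dots> = [s] @ ((x1 @ [t]) @ t # t # rev x1) @ [s]" by (simp add: x_def)
  also have "\<dots> \<simeq> [s] @ ((x1 @ [t]) @ rev x1) @ [s]"
    using word_eq_cancel_letter[of "x1 @ [t]" t "rev x1"] s t x1 by (intro cox_eq.cong) auto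
  finally show ?thesis by simp
qed

lemma last_letter_commutes:
  assumes I: "I \<subseteq> S" and s: "s \<in> S" "s \<notin> I"
    and x: "set (x1 @ [t]) \<subseteq> I" and red: "reduced (x1 @ [t])"
    and y: "set y \<subseteq> I" "[s] @ x1 @ [t] @ [s] \<simeq> y"
  shows "[s, t] \<simeq> [t, s]"
proof -
  define R where "R = [s] @ (x1 @ [t] @ rev x1) @ [s]"
  have xS: "set (x1 @ [t]) \<subseteq> S" and yS: "set y \<subseteq> S" and tI: "t \<in> I" and tS: "t \<in> S"
    using x y I by auto
  have "s # x1 @ [t] \<simeq> s # x1 @ [t] @ [s, s]"
    using word_eq_cancel_letter[of "s # x1 @ [t]" s "[]"] s xS word_eq_sym by simp
  also have "\<dots> \<simeq> y @ [s]" using word_eq_append[OF y(2) word_eq_refl[of "[s]"]] s xS by simp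
  finally have sx: "s # x1 @ [t] \<simeq> y @ [s]" .
  have R: "R = [s] @ refl_seq (x1 @ [t]) ! length x1 @ [s]" by (simp add: R_def nth_refl_seq)
  have "odd (refl_count (s # x1 @ [t]) R)"
    using refl_count_conj_odd[OF I s x red, of "length x1"] by (simp add: R)
  then have "odd (refl_count (y @ [s]) R)"
    using refl_count_parity[OF sx] s xS set_nth_refl_seq[OF xS, of "length x1"] by (simp add: R)
  then obtain e where e: "e \<in> set (refl_seq (y @ [s]))" "e \<simeq> R" using odd_refl_count_in_refl_seq by blast
  have conj: "y @ [s, t, s] @ rev y \<simeq> R"
    using conj_last_reflection[OF sx s(1) tS _ yS] xS by (simp add: R_def)
  have "e \<in> set (refl_seq y) \<or> e = y @ [s] @ rev y" using e(1) by (auto simp: refl_seq_append)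
  then show ?thesis
  proof
    assume "e \<in> set (refl_seq y)"
    then have eI: "set e \<subseteq> I" using set_refl_seq y(1) by blast
    have "y @ [s, t, s] @ rev y \<simeq> e" using conj e(2) word_eq_sym word_eq_trans by blast
    then have "[s, t, s] \<simeq> rev y @ e @ y" using conj_word_eq_iff[of y "[s, t, s]" e] yS s tS eI I by auto
    moreover have "set (rev y @ e @ y) \<subseteq> I" using eI y(1) by simp
    ultimately show ?thesis using sts_in_W_commute[OF I s tI] unfolding in_W_def by blast
  next
    assume "e = y @ [s] @ rev y"
    then have "y @ ([s] @ rev y) \<simeq> y @ ([s, t, s] @ rev y)"
      using conj e(2) word_eq_sym word_eq_trans by metis
    then have "[s] @ rev y \<simeq> [s, t, s] @ rev y" using word_eq_cancel_left yS s by simp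
    then have "[s] @ [] \<simeq> [s] @ [t, s]" using word_eq_cancel_right yS s by simp
    then have "[] \<simeq> [t, s]" using word_eq_cancel_left[of "[s]" "[]" "[t, s]"] s by simp
    then have "[t] \<simeq> [s]" using letter_eq_if_pair_trivial[OF tS s(1)] word_eq_sym by blast
    then show ?thesis using generator_not_in_W[OF s, of "[t]"] tI word_eq_sym by auto
  qed
qed

lemma conj_drop_commuting_letter:
  assumes s: "s \<in> S" and t: "t \<in> I" and I: "I \<subseteq> S" and x1: "set x1 \<subseteq> S"
    and comm: "[s, t] \<simeq> [t, s]" and conj: "in_W I ([s] @ x1 @ [t] @ [s])"
  shows "in_W I ([s] @ x1 @ [s])"
proof -
  have tS: "t \<in> S" using t I by blast
  obtain y where y: "set y \<subseteq> I" "[s] @ x1 @ [t] @ [s] \<simeq> y" using conj by (auto simp: in_W_def)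
  have "[s] @ x1 @ [s] \<simeq> [s] @ x1 @ t # t # [s]"
    using word_eq_cancel_letter[of "[s] @ x1" t "[s]"] s tS x1 word_eq_sym by simp
  also have "\<dots> \<simeq> ([s] @ x1 @ [t]) @ s # s # [t, s]"
    using word_eq_cancel_letter[of "[s] @ x1 @ [t]" s "[t, s]"] s tS x1 word_eq_sym by simp
  also have "\<dots> = ([s] @ x1 @ [t] @ [s]) @ [s, t, s]" by simp
  also have "\<dots> \<simeq> y @ [t]"
  proof (rule word_eq_append[OF y(2)])
    have "[s, t] @ [s] \<simeq> [t, s] @ [s]" by (rule word_eq_append[OF comm word_eq_refl]) (use s tS in auto)
    also have "\<dots> \<simeq> [t]" using word_eq_cancel_letter[of "[t]" s "[]"] s tS by simp
    finally show "[s, t, s] \<simeq> [t]" by simp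
  qed (use s tS x1 in auto)
  finally show ?thesis using y t unfolding in_W_def by (intro exI[of _ "y @ [t]"]) auto
qed

theorem conj_in_W_commuting:
  assumes I: "I \<subseteq> S" and s: "s \<in> S" "s \<notin> I"
  shows "set x \<subseteq> I \<Longrightarrow> in_W I ([s] @ x @ [s]) \<Longrightarrow> in_W {t \<in> I. [s, t] \<simeq> [t, s]} x"
proof (induction x rule: length_induct)
  case (1 x)
  show ?case
  proof (cases "reduced x")
    case False
    then obtain x' where x': "set x' \<subseteq> I" "length x' < length x" "x \<simeq> x'"
      using not_reduced_shorter[OF "1.prems"(1) I] by blast
    have "[s] @ x' @ [s] \<simeq> [s] @ x @ [s]"
      using cox_eq.cong[OF word_eq_sym[OF x'(3)], of "[s]" "[s]"] s by simp
    then have "in_W {t \<in> I. [s, t] \<simeq> [t, s]} x'"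
      using "1.IH" x' in_W_word_eq[OF "1.prems"(2)] by blast
    then show ?thesis using x'(3) unfolding in_W_def by (blast intro: word_eq_trans)
  next
    case reduced: True
    show ?thesis
    proof (cases x rule: rev_cases)
      case Nil
      then show ?thesis unfolding in_W_def by (intro exI[of _ "[]"]) simp
    next
      case (snoc x1 t)
      have tI: "t \<in> I" and x1: "set x1 \<subseteq> I" using "1.prems"(1) snoc by auto
      then have x1S: "set x1 \<subseteq> S" and tS: "t \<in> S" using I by auto
      obtain y where y: "set y \<subseteq> I" "[s] @ x1 @ [t] @ [s] \<simeq> y"
        using "1.prems"(2) snoc by (auto simp: in_W_def)
      have comm: "[s, t] \<simeq> [t, s]"
        using last_letter_commutes[OF I s _ _ y] "1.prems"(1) reduced snoc by simp
      have "in_W I ([s] @ x1 @ [s])"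
        using conj_drop_commuting_letter[OF s(1) tI I x1S comm] "1.prems"(2) snoc by simp
      then have "in_W {t \<in> I. [s, t] \<simeq> [t, s]} x1" using "1.IH"[rule_format, of x1] x1 snoc by simp
      then obtain v where v: "set v \<subseteq> {t \<in> I. [s, t] \<simeq> [t, s]}" "x1 \<simeq> v"
        unfolding in_W_def by blast
      have "x \<simeq> v @ [t]" using word_eq_append[OF v(2) word_eq_refl[of "[t]"]] x1S tS snoc by simp
      then show ?thesis using v(1) tI comm unfolding in_W_def by (intro exI[of _ "v @ [t]"]) auto
    qed
  qed
qed

end

section \<open>The diagrams \<open>\<Gamma>\<^sub>n\<close>\<close>

lemma gamma_S_mono: "k \<le> k' \<Longrightarrow> gamma_S S0 m1 k \<subseteq> gamma_S S0 m1 k'"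
  by (auto simp: gamma_S_def)

lemma gamma_S_1: "gamma_S S0 m1 1 = Inl ` S0 \<union> {Inr 1}"
  by (auto simp: gamma_S_def)

lemma coxeter_matrix_gamma:
  assumes cm: "coxeter_matrix (gamma_S S0 m1 1) m1"
  shows "coxeter_matrix (gamma_S S0 m1 (int n)) (gamma_M m1)"
proof -
  have m1: "\<And>s. s \<in> gamma_S S0 m1 1 \<Longrightarrow> m1 s s = 1"
    "\<And>s t. s \<in> gamma_S S0 m1 1 \<Longrightarrow> t \<in> gamma_S S0 m1 1 \<Longrightarrow> m1 s t = m1 t s"
    "\<And>s t. s \<in> gamma_S S0 m1 1 \<Longrightarrow> t \<in> gamma_S S0 m1 1 \<Longrightarrow> s \<noteq> t \<Longrightarrow> m1 s t \<ge> 2"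
    using cm unfolding coxeter_matrix_def by blast+
  have S1: "Inl a \<in> gamma_S S0 m1 1 \<longleftrightarrow> a \<in> S0" "Inr (Suc 0) \<in> gamma_S S0 m1 1" for a
    by (auto simp: gamma_S_1)
  have Sn: "x \<in> gamma_S S0 m1 (int n) \<Longrightarrow> (\<And>a. x = Inl a \<Longrightarrow> a \<in> S0 \<Longrightarrow> P) \<Longrightarrow> (\<And>j. x = Inr j \<Longrightarrow> P) \<Longrightarrow> P"
    for x P by (auto simp: gamma_S_def)
  show ?thesis
    unfolding coxeter_matrix_def
  proof (intro conjI ballI impI)
    fix s t assume s: "s \<in> gamma_S S0 m1 (int n)" and t: "t \<in> gamma_S S0 m1 (int n)"
    show "gamma_M m1 s t = gamma_M m1 t s"
      by (rule Sn[OF s]; rule Sn[OF t]) (auto simp: gamma_M_def m1(2) S1)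
    show "s \<noteq> t \<Longrightarrow> 2 \<le> gamma_M m1 s t"
      by (rule Sn[OF s]; rule Sn[OF t]) (auto simp: gamma_M_def m1(3) S1)
  next
    fix s assume s: "s \<in> gamma_S S0 m1 (int n)"
    show "gamma_M m1 s s = 1"
      by (rule Sn[OF s]) (auto simp: gamma_M_def m1(1) S1)
  qed
qed

lemma gamma_M_not_commuting:
  assumes cm: "coxeter_matrix (gamma_S S0 m1 1) m1" and k: "1 \<le> k"
    and t: "t \<in> gamma_S S0 m1 (int k - 1)" "t \<notin> gamma_S S0 m1 (int k - 2)"
  shows "gamma_M m1 (Inr k) t \<noteq> 2"
proof (cases "k = 1")
  case True
  then obtain a where a: "t = Inl a" "a \<in> S0" "m1 (Inl a) (Inr 1) \<noteq> 2"
    using t by (auto simp: gamma_S_def)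
  have "m1 (Inr 1) (Inl a) = m1 (Inl a) (Inr 1)"
    using cm a(2) unfolding coxeter_matrix_def gamma_S_1 by blast
  then show ?thesis using a True by (simp add: gamma_M_def)
next
  case False
  then have "t = Inr (k - 1)" using t k by (auto simp: gamma_S_def nat_diff_distrib image_iff)
  then show ?thesis using False k by (auto simp: gamma_M_def)
qed

locale gamma_chain =
  fixes S0 :: "'a set" and m1 :: "('a + nat) \<Rightarrow> ('a + nat) \<Rightarrow> enat" and n :: nat
  assumes finite_S0: "finite S0" and coxeter_m1: "coxeter_matrix (gamma_S S0 m1 1) m1"

sublocale gamma_chain \<subseteq> coxeter_system "gamma_S S0 m1 (int n)" "gamma_M m1"
  using finite_S0 coxeter_matrix_gamma[OF coxeter_m1] by unfold_locales (simp_all add: gamma_S_def)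

context gamma_chain
begin

notation word_eq (infix "\<simeq>" 50)

abbreviation J :: "int \<Rightarrow> ('a + nat) set" where
  "J k \<equiv> gamma_S S0 m1 k"

lemma in_parabolic_iff_in_W: "in_parabolic S0 m1 n k w \<longleftrightarrow> in_W (J k) w"
  by (simp add: in_parabolic_def in_W_def)

lemma conj_by_generator_in_parabolic:
  assumes k: "1 \<le> k" "k \<le> n" and x: "in_W (J (int k - 1)) x"
    and conj: "in_W (J (int k - 1)) ([Inr k] @ x @ [Inr k])"
  shows "in_W (J (int k - 2)) x"
proof -
  obtain x' where x': "set x' \<subseteq> J (int k - 1)" "x \<simeq> x'" using x by (auto simp: in_W_def)
  have I: "J (int k - 1) \<subseteq> J (int n)" using k by (intro gamma_S_mono) simp
  have s: "Inr k \<in> J (int n)" "Inr k \<notin> J (int k - 1)" using k by (auto simp: gamma_S_def)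
  have "[Inr k] @ x' @ [Inr k] \<simeq> [Inr k] @ x @ [Inr k]"
    using cox_eq.cong[OF word_eq_sym[OF x'(2)], of "[Inr k]" "[Inr k]"] s by simp
  then have "in_W {t \<in> J (int k - 1). [Inr k, t] \<simeq> [t, Inr k]} x'"
    using conj_in_W_commuting[OF I s x'(1)] in_W_word_eq[OF conj] by blast
  moreover have "{t \<in> J (int k - 1). [Inr k, t] \<simeq> [t, Inr k]} \<subseteq> J (int k - 2)"
    using noncommuting_generators[OF s(1)] gamma_M_not_commuting[OF coxeter_m1 k(1)] I s(2) by blast
  ultimately show ?thesis using x'(2) unfolding in_W_def by (blast intro: word_eq_trans)
qed

lemma chain_conj_in_parabolic:
  assumes k: "1 \<le> k" "k \<le> m" "m \<le> n" and x: "in_W (J (int k - 1)) x"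
  shows "in_W (J (int m - 1)) (rev (chain_word k m) @ x @ chain_word k m) \<Longrightarrow> in_W (J (int k - 2)) x"
  using k(2,3)
proof (induction m rule: dec_induct)
  case base
  then show ?case using conj_by_generator_in_parabolic[OF k(1) _ x] by (simp add: chain_word_def)
next
  case (step l)
  define c :: "('a + nat) list" where "c = chain_word k l"
  have chain: "chain_word k (Suc l) = c @ [Inr (Suc l)]" using step.hyps by (simp add: chain_word_def c_def)
  have c: "set c \<subseteq> J (int l)" using k(1) by (auto simp: c_def chain_word_def gamma_S_def)
  have Jl: "J (int k - 1) \<subseteq> J (int l)" "J (int l) \<subseteq> J (int n)"
    using step.hyps step.prems by (simp_all add: gamma_S_mono)
  then obtain x' where x': "set x' \<subseteq> J (int l)" "x \<simeq> x'" using x by (auto simp: in_W_def)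
  have "rev c @ x @ c \<simeq> rev c @ x' @ c" using cox_eq.cong[OF x'(2), of "rev c" c] c Jl by auto
  then have "in_W (J (int (Suc l) - 1)) (rev c @ x @ c)"
    using c x' unfolding in_W_def by (intro exI[of _ "rev c @ x' @ c"]) auto
  moreover have "in_W (J (int (Suc l) - 1)) ([Inr (Suc l)] @ (rev c @ x @ c) @ [Inr (Suc l)])"
    using step.prems chain by simp
  ultimately have "in_W (J (int l - 1)) (rev c @ x @ c)"
    using conj_by_generator_in_parabolic[of "Suc l"] step by simp
  then show ?case using step.IH step.prems by (simp add: c_def)
qed

end

theorem proposition3p3:
  fixes S0 :: "'a set" and m1 :: "('a + nat) \<Rightarrow> ('a + nat) \<Rightarrow> enat"
    and n i :: nat and \<sigma> \<tau> :: "('a + nat) list"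
  assumes "finite S0"
    and "coxeter_matrix (gamma_S S0 m1 1) m1"
    and "1 \<le> n" and "1 \<le> i" and "i \<le> n"
    and "set \<sigma> \<subseteq> gamma_S S0 m1 (int n)" and "set \<tau> \<subseteq> gamma_S S0 m1 (int n)"
    and "\<forall>j\<in>{i..n+1}. in_parabolic S0 m1 n (int n - 1)
            (rev (\<sigma> @ chain_word j n) @ (\<tau> @ chain_word j n))"
  shows "in_parabolic S0 m1 n (int i - 2) (rev \<sigma> @ \<tau>)"
proof -
  interpret gamma_chain S0 m1 n using assms(1,2) by unfold_locales
  define w where "w = rev \<sigma> @ \<tau>"
  have hyp: "in_W (J (int n - 1)) (rev (chain_word j n) @ w @ chain_word j n)" if "i \<le> j" "j \<le> n + 1" for j
    using assms(8) that by (simp add: w_def in_parabolic_iff_in_W)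
  have "in_W (J (int j - 2)) w" if "j \<le> n + 1" "i \<le> j" for j
    using that
  proof (induction j rule: inc_induct)
    case base
    show ?case using hyp[of "n + 1"] assms(5) by (simp add: chain_word_def)
  next
    case (step j)
    then show ?case using chain_conj_in_parabolic[of j n w] hyp[of j] assms(4) by simp
  qed
  then show ?thesis using assms(5) by (simp add: w_def in_parabolic_iff_in_W)
qed

end
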